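(* Let $\beta_0>0$, $M>0$, and let $(f_n)_{n\ge0}$ be a pointwise converging sequence of increasing differentiable functions $f_n:[0,\beta_0]\to[0,M]$ such that for all $n\ge1$, $$f_n'\ \ge\ \frac{n}{\Sigma_n}\,f_n,\qquad\text{where } \Sigma_n=\sum_{k=0}^{n-1}f_k .$$ Then there exists $\beta_1\in[0,\beta_0]$ such that: (P1) for every $\beta<\beta_1$ there exists $c_\beta>0$ such that $f_n(\beta)\le\exp(-c_\beta n)$ for all $n$ large enough; (P2) for every $\beta>\beta_1$ (with $\beta\le\beta_0$), the limit $f=\lim_{n\to\infty}f_n$ satisfies $f(\beta)\ge\beta-\beta_1$.
   Context: The differential inequality is assumed to hold pointwise on $[0,\beta_0]$ (in particular $\Sigma_n>0$ wherever it is used). *)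

theory Defs
  imports "HOL-Analysis.Analysis"
begin

end

theory Submission
  imports Defs "HOL-Real_Asymp.Real_Asymp"
begin

text \<open>Call \<open>x\<close> heavy if for every \<open>\<alpha> > 0\<close> the partial sums \<open>\<Sigma>\<^sub>n(x)\<close> exceed \<open>n\<^sup>1\<^sup>-\<^sup>\<alpha>\<close>
  infinitely often, and let \<open>\<beta>\<^sub>1\<close> be the infimum of the heavy points.
  Left of a non-heavy point \<open>y\<close> we have \<open>f\<^sub>n' \<ge> n\<^sup>\<alpha> f\<^sub>n\<close>, so \<open>f\<^sub>n\<close> decays like
  \<open>exp (-c n\<^sup>\<alpha>)\<close>; hence \<open>\<Sigma>\<^sub>n\<close> stays bounded there, and then \<open>f\<^sub>n' \<ge> (n/C) f\<^sub>n\<close> gives exponential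
  decay further left.
  Right of a heavy point \<open>s\<close>, the weighted sum \<open>W\<^sub>n = \<Sum>\<^sub>i\<^sub>\<le>\<^sub>n f\<^sub>i / i\<close> satisfies
  \<open>W\<^sub>n' \<ge> \<Sum> f\<^sub>i / \<Sigma>\<^sub>i \<ge> ln \<Sigma>\<^sub>n\<^sub>+\<^sub>1 - ln M\<close> (telescoping \<open>ln (1 + t) \<le> t\<close>), so
  \<open>W\<^sub>n(\<beta>) \<ge> (\<beta> - s)(1 - \<alpha>) ln n - O(1)\<close> infinitely often, whereas
  \<open>W\<^sub>n(\<beta>) \<le> (lim f(\<beta>) + \<epsilon>) ln n + O(1)\<close>; comparing the growth rates gives
  \<open>lim f(\<beta>) \<ge> \<beta> - s\<close>.\<close>

lemma DERIV_within_nonneg_imp_increasing: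
  fixes h h' :: "real \<Rightarrow> real"
  assumes "a \<le> b"
    and deriv: "\<And>x. x \<in> {a..b} \<Longrightarrow> (h has_real_derivative h' x) (at x within {a..b})"
    and nonneg: "\<And>x. x \<in> {a..b} \<Longrightarrow> 0 \<le> h' x"
  shows "h a \<le> h b"
proof (rule DERIV_nonneg_imp_increasing_open[OF \<open>a \<le> b\<close>])
  fix x assume x: "a < x" "x < b"
  then have "(h has_real_derivative h' x) (at x)"
    using deriv[of x] at_within_Icc_at[OF x] by auto
  then show "\<exists>y. (h has_real_derivative y) (at x) \<and> 0 \<le> y"
    using nonneg[of x] x by auto
qed (rule DERIV_continuous_on[OF deriv])

lemma DERIV_ge_mult_imp_exp_bound:
  fixes g g' :: "real \<Rightarrow> real"
  assumes "a \<le> b" and sub: "{a..b} \<subseteq> T"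
    and deriv: "\<And>x. x \<in> {a..b} \<Longrightarrow> (g has_real_derivative g' x) (at x within T)"
    and ge: "\<And>x. x \<in> {a..b} \<Longrightarrow> c * g x \<le> g' x"
  shows "g a \<le> g b * exp (- c * (b - a))"
proof -
  have "g a * exp (- c * a) \<le> g b * exp (- c * b)"
  proof (rule DERIV_within_nonneg_imp_increasing
      [where h' = "\<lambda>x. (g' x - c * g x) * exp (- c * x)", OF \<open>a \<le> b\<close>])
    fix x assume x: "x \<in> {a..b}"
    show "((\<lambda>x. g x * exp (- c * x)) has_real_derivative (g' x - c * g x) * exp (- c * x))
        (at x within {a..b})"
      using DERIV_subset[OF deriv[OF x] sub]
      by (auto intro!: derivative_eq_intros simp: algebra_simps)
    show "0 \<le> (g' x - c * g x) * exp (- c * x)"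
      using ge[OF x] by simp
  qed
  then have "g a * exp (- c * a) * exp (c * a) \<le> g b * exp (- c * b) * exp (c * a)"
    by (rule mult_right_mono) simp
  then show ?thesis
    by (simp add: mult.assoc exp_add[symmetric] algebra_simps)
qed

lemma summable_exp_neg_powr:
  fixes d a :: real
  assumes "d > 0" "a > 0"
  shows "summable (\<lambda>k::nat. exp (- d * real k powr a))"
proof -
  have "(\<lambda>k::nat. exp (- d * real k powr a)) \<in> o(\<lambda>k. 1 / real k ^ 2)"
    using assms by real_asymp
  from landau_o.smallD[OF this, of 1]
  have "\<forall>\<^sub>F k in sequentially. norm (exp (- d * real k powr a)) \<le> inverse (real k ^ 2)"
    by (simp add: divide_inverse)
  then show ?thesis
    by (rule summable_comparison_test_ev[OF _ inverse_power_summable]) simp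
qed

lemma harm_le_ln_plus_one:
  assumes "n \<ge> 1"
  shows "(harm n :: real) \<le> ln (real n) + 1"
proof -
  obtain m where m: "n = Suc m" using assms by (cases n) auto
  have "harm (Suc m) - ln (real (Suc m)) \<le> (harm (Suc 0) :: real) - ln (real (Suc 0))"
    using decseq_harm_diff_ln unfolding decseq_def by (metis le0)
  then show ?thesis using m by (simp add: harm_Suc harm_def)
qed

lemma sum_div_index_le:
  fixes a :: "nat \<Rightarrow> real"
  assumes nonneg: "\<And>i. 0 \<le> a i" and le_M: "\<And>i. a i \<le> M"
    and tail: "\<And>i. N \<le> i \<Longrightarrow> a i \<le> D"
  shows "(\<Sum>i=1..n. a i / real i) \<le> real N * M + D * harm n"
proof -
  have "0 \<le> D" using nonneg[of N] tail[of N] by simp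
  have "(\<Sum>i=1..n. a i / real i) \<le> (\<Sum>i=1..n. (if i < N then M else 0) + D / real i)"
  proof (rule sum_mono)
    fix i assume "i \<in> {1..n}"
    then have i: "1 \<le> real i" by simp
    show "a i / real i \<le> (if i < N then M else 0) + D / real i"
    proof (cases "i < N")
      case True
      have "a i / real i \<le> a i" using nonneg[of i] i by (simp add: divide_le_eq mult_le_cancel_left1)
      moreover have "0 \<le> D / real i" using \<open>0 \<le> D\<close> by simp
      ultimately show ?thesis using True le_M[of i] by simp
    next
      case False
      then show ?thesis using tail[of i] i by (simp add: divide_right_mono)
    qed
  qed
  also have "\<dots> = (\<Sum>i=1..n. if i < N then M else 0) + D * harm n"
    by (simp add: sum.distrib sum_distrib_left harm_def divide_inverse)
  also have "\<dots> \<le> real N * M + D * harm n"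
  proof -
    have "(\<Sum>i=1..n. if i < N then M else 0) = (\<Sum>i\<in>{1..n} \<inter> {..<N}. M)"
      by (subst sum.inter_restrict) auto
    also have "\<dots> \<le> real N * M"
      using card_mono[of "{..<N}" "{1..n} \<inter> {..<N}"] le_M[of 0] nonneg[of 0]
      by (simp add: mult_right_mono)
    finally show ?thesis by simp
  qed
  finally show ?thesis .
qed

lemma ln_partial_sum_le_sum_div_partial_sums:
  fixes a :: "nat \<Rightarrow> real"
  assumes nonneg: "\<And>i. 0 \<le> a i" and pos: "\<And>i. 1 \<le> i \<Longrightarrow> 0 < (\<Sum>k<i. a k)"
  shows "ln (\<Sum>k<Suc n. a k) - ln (a 0) \<le> (\<Sum>i=1..n. a i / (\<Sum>k<i. a k))"
proof (induction n)
  case 0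
  then show ?case by simp
next
  case (Suc n)
  define S where "S = (\<Sum>k<Suc n. a k)"
  have S: "0 < S" "0 < S + a (Suc n)" using pos[of "Suc n"] nonneg[of "Suc n"] by (simp_all add: S_def)
  have "ln (S + a (Suc n)) - ln S = ln ((S + a (Suc n)) / S)"
    using S by (simp add: ln_div)
  also have "\<dots> \<le> (S + a (Suc n)) / S - 1"
    using S by (intro ln_le_minus_one) simp
  also have "\<dots> = a (Suc n) / S"
    using S by (simp add: field_simps)
  finally show ?case
    using Suc.IH by (simp add: S_def)
qed

lemma le_of_frequently_mult_le:
  fixes A D E :: real
  assumes "filterlim g at_top F"
    and "\<exists>\<^sub>F x in F. A * g x \<le> D * g x + E"
  shows "A \<le> D"
proof (rule ccontr)
  assume "\<not> A \<le> D"
  have "\<forall>\<^sub>F x in F. E / (A - D) < g x"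
    using assms(1) by (simp add: filterlim_at_top_dense)
  then have "\<forall>\<^sub>F x in F. E < (A - D) * g x"
    by eventually_elim (use \<open>\<not> A \<le> D\<close> in \<open>simp add: pos_divide_less_eq mult.commute\<close>)
  with assms(2) have "\<exists>\<^sub>F x in F. False"
    by (rule frequently_eventually_frequently[THEN frequently_elim1]) (auto simp: algebra_simps)
  then show False by simp
qed

locale partial_sum_growth =
  fixes f f' :: "nat \<Rightarrow> real \<Rightarrow> real" and \<beta>0 M :: real
  assumes \<beta>0_nonneg: "0 \<le> \<beta>0" and M_pos: "0 < M"
    and conv: "\<And>x. x \<in> {0..\<beta>0} \<Longrightarrow> convergent (\<lambda>n. f n x)"
    and incr: "\<And>n. mono_on {0..\<beta>0} (f n)"
    and deriv: "\<And>n x. x \<in> {0..\<beta>0} \<Longrightarrow> (f n has_real_derivative f' n x) (at x within {0..\<beta>0})"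
    and range: "\<And>n x. x \<in> {0..\<beta>0} \<Longrightarrow> 0 \<le> f n x \<and> f n x \<le> M"
    and partial_sums_pos: "\<And>n x. n \<ge> 1 \<Longrightarrow> x \<in> {0..\<beta>0} \<Longrightarrow> (\<Sum>k<n. f k x) > 0"
    and deriv_ineq: "\<And>n x. n \<ge> 1 \<Longrightarrow> x \<in> {0..\<beta>0} \<Longrightarrow>
                  f' n x \<ge> real n / (\<Sum>k<n. f k x) * f n x"
begin

definition Sigma :: "nat \<Rightarrow> real \<Rightarrow> real" where
  "Sigma n x = (\<Sum>k<n. f k x)"

definition heavy :: "real \<Rightarrow> bool" where
  "heavy x \<longleftrightarrow> (\<forall>\<alpha>>0. \<exists>\<^sub>F n in sequentially. real n powr (1 - \<alpha>) < Sigma n x)"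

text \<open>Inserting \<open>\<beta>0\<close> makes the threshold \<open>\<beta>0\<close> when there are no heavy points.\<close>

definition threshold :: real where
  "threshold = Inf (insert \<beta>0 {x \<in> {0..\<beta>0}. heavy x})"

lemma f_nonneg: "x \<in> {0..\<beta>0} \<Longrightarrow> 0 \<le> f n x"
  and f_le_M: "x \<in> {0..\<beta>0} \<Longrightarrow> f n x \<le> M"
  using range by auto

lemma Sigma_pos: "1 \<le> n \<Longrightarrow> x \<in> {0..\<beta>0} \<Longrightarrow> 0 < Sigma n x"
  using partial_sums_pos by (simp add: Sigma_def)

lemma deriv_ge: "1 \<le> n \<Longrightarrow> x \<in> {0..\<beta>0} \<Longrightarrow> real n / Sigma n x * f n x \<le> f' n x"
  using deriv_ineq by (simp add: Sigma_def)

lemma Sigma_mono: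
  "x \<in> {0..\<beta>0} \<Longrightarrow> y \<in> {0..\<beta>0} \<Longrightarrow> x \<le> y \<Longrightarrow> Sigma n x \<le> Sigma n y"
  unfolding Sigma_def by (intro sum_mono mono_onD[OF incr]) auto

lemma threshold_bounds: "threshold \<in> {0..\<beta>0}"
  using \<beta>0_nonneg by (auto simp: threshold_def intro!: cInf_lower cInf_greatest)

lemma not_heavy_below_threshold:
  assumes "x \<in> {0..\<beta>0}" "x < threshold"
  shows "\<not> heavy x"
proof
  assume "heavy x"
  have "bdd_below (insert \<beta>0 {x \<in> {0..\<beta>0}. heavy x})"
    by (auto intro: bdd_belowI[of _ 0])
  then have "threshold \<le> x"
    unfolding threshold_def by (rule cInf_lower[rotated]) (use \<open>heavy x\<close> assms in auto)
  with assms show False by simp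
qed

lemma heavy_near_threshold:
  assumes "threshold < \<beta>" "\<beta> \<le> \<beta>0" "0 < e"
  obtains s where "s \<in> {0..\<beta>0}" "heavy s" "s < \<beta>" "s < threshold + e"
proof -
  have "Inf (insert \<beta>0 {x \<in> {0..\<beta>0}. heavy x}) < threshold + min e (\<beta> - threshold)"
    using assms by (simp add: threshold_def)
  then obtain s where "s \<in> insert \<beta>0 {x \<in> {0..\<beta>0}. heavy x}" "s < threshold + min e (\<beta> - threshold)"
    by (subst (asm) cInf_less_iff) (auto intro!: bdd_belowI[of _ 0])
  with assms that show thesis by auto
qed

lemma f_le_exp_of_Sigma_le:
  assumes x: "x \<in> {0..\<beta>0}" and y: "y \<in> {0..\<beta>0}" and "x \<le> y" "1 \<le> n"
    and bound: "Sigma n y \<le> B"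
  shows "f n x \<le> M * exp (- (real n / B) * (y - x))"
proof -
  have "f n x \<le> f n y * exp (- (real n / B) * (y - x))"
  proof (rule DERIV_ge_mult_imp_exp_bound[OF \<open>x \<le> y\<close>, where T = "{0..\<beta>0}"])
    show sub: "{x..y} \<subseteq> {0..\<beta>0}" using x y by auto
    fix t assume "t \<in> {x..y}"
    with sub have t: "t \<in> {0..\<beta>0}" "t \<le> y" by auto
    show "(f n has_real_derivative f' n t) (at t within {0..\<beta>0})"
      by (rule deriv[OF t(1)])
    have "0 < Sigma n t" "Sigma n t \<le> B"
      using Sigma_pos[OF \<open>1 \<le> n\<close> t(1)] Sigma_mono[OF t(1) y t(2), of n] bound by auto
    then have "real n / B \<le> real n / Sigma n t"
      by (intro divide_left_mono) auto
    then have "real n / B * f n t \<le> real n / Sigma n t * f n t"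
      using f_nonneg[OF t(1)] by (rule mult_right_mono)
    also have "\<dots> \<le> f' n t" by (rule deriv_ge[OF \<open>1 \<le> n\<close> t(1)])
    finally show "real n / B * f n t \<le> f' n t" .
  qed
  also have "\<dots> \<le> M * exp (- (real n / B) * (y - x))"
    using f_le_M[OF y] by (rule mult_right_mono) simp
  finally show ?thesis .
qed

lemma Sigma_bounded_left_of_light:
  assumes x: "x \<in> {0..\<beta>0}" and y: "y \<in> {0..\<beta>0}" and "x < y" "\<not> heavy y"
  obtains C where "0 < C" "\<And>n. Sigma n x \<le> C"
proof -
  obtain \<alpha> where "0 < \<alpha>" and light: "\<forall>\<^sub>F n in sequentially. Sigma n y \<le> real n powr (1 - \<alpha>)"
    using \<open>\<not> heavy y\<close> by (auto simp: heavy_def not_frequently not_less)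
  have "\<forall>\<^sub>F k in sequentially. norm (f k x) \<le> M * exp (- (y - x) * real k powr \<alpha>)"
    using light eventually_ge_at_top[of 1]
  proof eventually_elim
    case (elim k)
    have "real k / real k powr (1 - \<alpha>) = real k powr \<alpha>"
      using elim by (simp add: powr_diff)
    then show ?case
      using f_le_exp_of_Sigma_le[OF x y less_imp_le[OF \<open>x < y\<close>] elim(2,1)] f_nonneg[OF x]
      by (simp add: algebra_simps)
  qed
  then have summable: "summable (\<lambda>k. f k x)"
    by (rule summable_comparison_test_ev)
      (intro summable_mult summable_exp_neg_powr \<open>0 < \<alpha>\<close>, use \<open>x < y\<close> in simp)
  show thesis
  proof (rule that[of "max 1 (suminf (\<lambda>k. f k x))"])
    fix n
    show "Sigma n x \<le> max 1 (suminf (\<lambda>k. f k x))"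
      unfolding Sigma_def using sum_le_suminf[OF summable, of "{..<n}"] f_nonneg[OF x] by auto
  qed simp
qed

lemma exp_decay_left_of_light:
  assumes x: "x \<in> {0..\<beta>0}" and y: "y \<in> {0..\<beta>0}" and "x < y" "\<not> heavy y"
  shows "\<exists>c>0. \<forall>\<^sub>F n in sequentially. f n x \<le> exp (- c * real n)"
proof -
  define z where "z = (x + y) / 2"
  have z: "z \<in> {0..\<beta>0}" "x < z" "z < y" using x y \<open>x < y\<close> by (auto simp: z_def)
  obtain C where "0 < C" and C: "\<And>n. Sigma n z \<le> C"
    using Sigma_bounded_left_of_light[OF z(1) y z(3) \<open>\<not> heavy y\<close>] by blast
  define c where "c = (z - x) / (2 * C)"
  have "0 < c" using z \<open>0 < C\<close> by (simp add: c_def)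
  have absorb_M: "\<forall>\<^sub>F n in sequentially. M * exp (- (2 * c) * real n) \<le> exp (- c * real n)"
    using M_pos \<open>0 < c\<close> by real_asymp
  have "\<forall>\<^sub>F n in sequentially. f n x \<le> exp (- c * real n)"
    using eventually_ge_at_top[of 1] absorb_M
  proof eventually_elim
    case (elim n)
    have "f n x \<le> M * exp (- (real n / C) * (z - x))"
      by (rule f_le_exp_of_Sigma_le[OF x z(1) less_imp_le[OF z(2)] elim(1) C])
    also have "\<dots> = M * exp (- (2 * c) * real n)"
      using \<open>0 < C\<close> by (simp add: c_def field_simps)
    also have "\<dots> \<le> exp (- c * real n)"
      by (rule elim(2))
    finally show ?case .
  qed
  with \<open>0 < c\<close> show ?thesis by blast
qed

lemma exp_decay_below_threshold:
  assumes "0 \<le> \<beta>" "\<beta> < threshold"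
  shows "\<exists>c>0. \<forall>\<^sub>F n in sequentially. f n \<beta> \<le> exp (- c * real n)"
proof -
  define y where "y = (\<beta> + threshold) / 2"
  have y: "y \<in> {0..\<beta>0}" "\<beta> < y" "y < threshold"
    using assms threshold_bounds by (auto simp: y_def)
  then show ?thesis
    using exp_decay_left_of_light[OF _ y(1,2) not_heavy_below_threshold[OF y(1,3)]] assms by simp
qed

definition weighted_sum :: "nat \<Rightarrow> real \<Rightarrow> real" where
  "weighted_sum n x = (\<Sum>i=1..n. f i x / real i)"

lemma ln_Sigma_le_weighted_deriv:
  assumes x: "x \<in> {0..\<beta>0}"
  shows "ln (Sigma (Suc n) x) - ln (Sigma 1 x) \<le> (\<Sum>i=1..n. f' i x / real i)"
proof -
  have "ln (Sigma (Suc n) x) - ln (Sigma 1 x) \<le> (\<Sum>i=1..n. f i x / Sigma i x)"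
    using ln_partial_sum_le_sum_div_partial_sums[of "\<lambda>k. f k x" n] f_nonneg[OF x] Sigma_pos[OF _ x]
    by (simp add: Sigma_def)
  also have "\<dots> \<le> (\<Sum>i=1..n. f' i x / real i)"
  proof (rule sum_mono)
    fix i assume "i \<in> {1..n}"
    then have i: "1 \<le> i" by simp
    have "f i x / Sigma i x = (real i / Sigma i x * f i x) / real i"
      using i by simp
    also have "\<dots> \<le> f' i x / real i"
      using deriv_ge[OF i x] by (intro divide_right_mono) auto
    finally show "f i x / Sigma i x \<le> f' i x / real i" .
  qed
  finally show ?thesis .
qed

lemma weighted_sum_increment:
  assumes s: "s \<in> {0..\<beta>0}" and \<beta>: "\<beta> \<in> {0..\<beta>0}" and "s \<le> \<beta>"
  shows "(\<beta> - s) * (ln (Sigma (Suc n) s) - ln M) \<le> weighted_sum n \<beta> - weighted_sum n s"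
proof -
  define K where "K = ln (Sigma (Suc n) s) - ln M"
  have sub: "{s..\<beta>} \<subseteq> {0..\<beta>0}" using s \<beta> by auto
  have "weighted_sum n s - K * s \<le> weighted_sum n \<beta> - K * \<beta>"
  proof (rule DERIV_within_nonneg_imp_increasing
      [where h' = "\<lambda>x. (\<Sum>i=1..n. f' i x / real i) - K", OF \<open>s \<le> \<beta>\<close>])
    fix x assume "x \<in> {s..\<beta>}"
    with sub have x: "x \<in> {0..\<beta>0}" "s \<le> x" by auto
    have "((\<lambda>x. \<Sum>i=1..n. f i x / real i) has_real_derivative (\<Sum>i=1..n. f' i x / real i))
        (at x within {s..\<beta>})"
      by (intro DERIV_sum DERIV_cdivide DERIV_subset[OF deriv[OF x(1)] sub])
    then show "((\<lambda>x. weighted_sum n x - K * x) has_real_derivative (\<Sum>i=1..n. f' i x / real i) - K)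
        (at x within {s..\<beta>})"
      unfolding weighted_sum_def by (rule DERIV_diff) (auto intro!: derivative_eq_intros)
    have "ln (Sigma (Suc n) s) \<le> ln (Sigma (Suc n) x)"
      using Sigma_mono[OF s x, of "Suc n"] Sigma_pos[of "Suc n", OF _ s] by simp
    moreover have "ln (Sigma 1 x) \<le> ln M"
      using Sigma_pos[of 1 x] f_le_M[OF x(1), of 0] x by (simp add: Sigma_def)
    ultimately show "0 \<le> (\<Sum>i=1..n. f' i x / real i) - K"
      using ln_Sigma_le_weighted_deriv[OF x(1), of n] by (simp add: K_def)
  qed
  then show ?thesis by (simp add: K_def algebra_simps)
qed

lemma weighted_sum_frequently_ge:
  assumes s: "s \<in> {0..\<beta>0}" "heavy s" and \<beta>: "\<beta> \<in> {0..\<beta>0}" "s \<le> \<beta>" and "0 < \<alpha>"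
  shows "\<exists>\<^sub>F n in sequentially. (\<beta> - s) * ((1 - \<alpha>) * ln (real (Suc n)) - ln M) \<le> weighted_sum n \<beta>"
proof -
  have "\<exists>\<^sub>F m in sequentially. real m powr (1 - \<alpha>) < Sigma m s"
    using \<open>heavy s\<close> \<open>0 < \<alpha>\<close> by (simp add: heavy_def)
  then have "\<exists>\<^sub>F n in sequentially. real (Suc n) powr (1 - \<alpha>) < Sigma (Suc n) s"
    unfolding frequently_def
    by (subst eventually_sequentially_Suc[of "\<lambda>m. \<not> real m powr (1 - \<alpha>) < Sigma m s"])
  then show ?thesis
  proof (rule frequently_elim1)
    fix n assume n: "real (Suc n) powr (1 - \<alpha>) < Sigma (Suc n) s"
    have "(1 - \<alpha>) * ln (real (Suc n)) = ln (real (Suc n) powr (1 - \<alpha>))"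
      by (simp add: ln_powr)
    also have "\<dots> \<le> ln (Sigma (Suc n) s)"
      using n by (intro ln_mono) auto
    finally have "(\<beta> - s) * ((1 - \<alpha>) * ln (real (Suc n)) - ln M)
        \<le> (\<beta> - s) * (ln (Sigma (Suc n) s) - ln M)"
      using \<open>s \<le> \<beta>\<close> by (intro mult_left_mono) auto
    also have "\<dots> \<le> weighted_sum n \<beta> - weighted_sum n s"
      by (rule weighted_sum_increment[OF s(1) \<beta>])
    also have "\<dots> \<le> weighted_sum n \<beta>"
      using f_nonneg[OF s(1)] by (simp add: weighted_sum_def sum_nonneg)
    finally show "(\<beta> - s) * ((1 - \<alpha>) * ln (real (Suc n)) - ln M) \<le> weighted_sum n \<beta>" .
  qed
qed

lemma weighted_sum_le_ln:
  assumes \<beta>: "\<beta> \<in> {0..\<beta>0}" and tail: "\<And>i. N \<le> i \<Longrightarrow> f i \<beta> \<le> D"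
  shows "weighted_sum n \<beta> \<le> real N * M + D * (ln (real (Suc n)) + 1)"
proof -
  have "weighted_sum n \<beta> \<le> real N * M + D * harm n"
    unfolding weighted_sum_def using f_nonneg[OF \<beta>] f_le_M[OF \<beta>] tail
    by (rule sum_div_index_le)
  also have "\<dots> \<le> real N * M + D * (ln (real (Suc n)) + 1)"
    using order_trans[OF harm_mono harm_le_ln_plus_one, of n "Suc n"]
      f_nonneg[OF \<beta>, of N] tail[of N]
    by (intro add_left_mono mult_left_mono) auto
  finally show ?thesis .
qed

lemma lim_ge_right_of_heavy:
  assumes s: "s \<in> {0..\<beta>0}" "heavy s" and "s < \<beta>" "\<beta> \<le> \<beta>0"
  shows "\<beta> - s \<le> lim (\<lambda>n. f n \<beta>)"
proof -
  have \<beta>: "\<beta> \<in> {0..\<beta>0}" using assms by auto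
  define L where "L = lim (\<lambda>n. f n \<beta>)"
  have lim: "(\<lambda>n. f n \<beta>) \<longlonglongrightarrow> L"
    using conv[OF \<beta>] by (simp add: L_def convergent_LIMSEQ_iff)
  show ?thesis unfolding L_def[symmetric]
  proof (rule field_le_epsilon)
    fix e :: real assume "0 < e"
    define \<alpha> where "\<alpha> = e / (2 * (\<beta> - s))"
    define D where "D = L + e / 2"
    have "0 < \<alpha>" using \<open>0 < e\<close> \<open>s < \<beta>\<close> by (simp add: \<alpha>_def)
    have "\<forall>\<^sub>F i in sequentially. f i \<beta> < D"
      using order_tendstoD(2)[OF lim] \<open>0 < e\<close> by (simp add: D_def)
    then obtain N where N: "\<And>i. N \<le> i \<Longrightarrow> f i \<beta> \<le> D"
      unfolding eventually_sequentially by (meson less_imp_le)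
    have "\<exists>\<^sub>F n in sequentially. (\<beta> - s) * (1 - \<alpha>) * ln (real (Suc n))
        \<le> D * ln (real (Suc n)) + (real N * M + D + (\<beta> - s) * ln M)"
      using weighted_sum_frequently_ge[OF s \<beta> less_imp_le[OF \<open>s < \<beta>\<close>] \<open>0 < \<alpha>\<close>]
    proof (rule frequently_elim1)
      fix n
      assume "(\<beta> - s) * ((1 - \<alpha>) * ln (real (Suc n)) - ln M) \<le> weighted_sum n \<beta>"
      moreover have "weighted_sum n \<beta> \<le> real N * M + D * (ln (real (Suc n)) + 1)"
        by (rule weighted_sum_le_ln[OF \<beta> N])
      ultimately show "(\<beta> - s) * (1 - \<alpha>) * ln (real (Suc n))
          \<le> D * ln (real (Suc n)) + (real N * M + D + (\<beta> - s) * ln M)"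
        by (simp add: algebra_simps)
    qed
    moreover have "filterlim (\<lambda>n. ln (real (Suc n))) at_top sequentially"
      by real_asymp
    ultimately have "(\<beta> - s) * (1 - \<alpha>) \<le> D"
      by (intro le_of_frequently_mult_le)
    moreover have "(\<beta> - s) * (1 - \<alpha>) = \<beta> - s - e / 2"
      using \<open>s < \<beta>\<close> by (simp add: \<alpha>_def field_simps)
    ultimately show "\<beta> - s \<le> L + e"
      by (simp add: D_def)
  qed
qed

lemma lim_ge_above_threshold:
  assumes "threshold < \<beta>" "\<beta> \<le> \<beta>0"
  shows "\<beta> - threshold \<le> lim (\<lambda>n. f n \<beta>)"
proof (rule field_le_epsilon)
  fix e :: real assume "0 < e"
  obtain s where "s \<in> {0..\<beta>0}" "heavy s" "s < \<beta>" "s < threshold + e"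
    using heavy_near_threshold[OF assms \<open>0 < e\<close>] by blast
  then show "\<beta> - threshold \<le> lim (\<lambda>n. f n \<beta>) + e"
    using lim_ge_right_of_heavy[of s \<beta>] assms by fastforce
qed

end

theorem lemma3p1:
  fixes f f' :: "nat \<Rightarrow> real \<Rightarrow> real" and \<beta>0 M :: real
  assumes beta0_pos: "\<beta>0 > 0" and M_pos: "M > 0"
    and conv: "\<And>x. x \<in> {0..\<beta>0} \<Longrightarrow> convergent (\<lambda>n. f n x)"
    and incr: "\<And>n. mono_on {0..\<beta>0} (f n)"
    and deriv: "\<And>n x. x \<in> {0..\<beta>0} \<Longrightarrow>
                  (f n has_real_derivative f' n x) (at x within {0..\<beta>0})"
    and range: "\<And>n x. x \<in> {0..\<beta>0} \<Longrightarrow> 0 \<le> f n x \<and> f n x \<le> M"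
    and Sigma_pos: "\<And>n x. n \<ge> 1 \<Longrightarrow> x \<in> {0..\<beta>0} \<Longrightarrow> (\<Sum>k<n. f k x) > 0"
    and diffineq: "\<And>n x. n \<ge> 1 \<Longrightarrow> x \<in> {0..\<beta>0} \<Longrightarrow>
                  f' n x \<ge> real n / (\<Sum>k<n. f k x) * f n x"
  shows "\<exists>\<beta>1 \<in> {0..\<beta>0}.
           (\<forall>\<beta>. 0 \<le> \<beta> \<and> \<beta> < \<beta>1 \<longrightarrow>
              (\<exists>c>0. \<forall>\<^sub>F n in sequentially. f n \<beta> \<le> exp (- c * real n))) \<and>
           (\<forall>\<beta>. \<beta>1 < \<beta> \<and> \<beta> \<le> \<beta>0 \<longrightarrow> lim (\<lambda>n. f n \<beta>) \<ge> \<beta> - \<beta>1)"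
proof -
  interpret partial_sum_growth f f' \<beta>0 M
    by unfold_locales (use assms in auto)
  show ?thesis
    using threshold_bounds exp_decay_below_threshold lim_ge_above_threshold by blast
qed

end
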